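(* For every positive integer $n$, there is a temporal graph $G$ on $n$ vertices and a vertex $s$ of $G$ such that every single-source temporal preserver of $G$ with respect to $s$ has size $\Theta(n^2)$.
   Context: A temporal graph is an undirected graph $G=(V,E)$ with a labeling $\lambda:E\to\mathbb{N}^+$. A temporal path is a path whose traversed edges have non-decreasing labels in the order of traversal; its length is its number of edges, and $d_G(u,v)$ is the minimum length of a temporal path from $u$ to $v$ in $G$ ($+\infty$ if none). A single-source temporal preserver of $G$ w.r.t. $s$ is a subgraph $H$ with $V(H)=V$, $E(H)\subseteq E$ (same labels), such that $d_H(s,v)= d_G(s,v)$ for every $v\in V$. Its size is its number of edges. *)

theory Defs
  imports Main "HOL-Library.Extended_Nat"
begin

definition temporal_graph :: "'a set \<Rightarrow> 'a set set \<Rightarrow> ('a set \<Rightarrow> nat) \<Rightarrow> bool" where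
  "temporal_graph V E lam \<longleftrightarrow> finite V \<and>
     E \<subseteq> {{u, v} | u v. u \<in> V \<and> v \<in> V \<and> u \<noteq> v} \<and>
     (\<forall>e\<in>E. lam e > 0)"

definition temporal_path :: "'a set \<Rightarrow> 'a set set \<Rightarrow> ('a set \<Rightarrow> nat) \<Rightarrow> 'a list \<Rightarrow> bool" where
  "temporal_path V E lam p \<longleftrightarrow> p \<noteq> [] \<and> distinct p \<and> set p \<subseteq> V \<and>
     (\<forall>i. Suc i < length p \<longrightarrow> {p ! i, p ! Suc i} \<in> E) \<and>
     (\<forall>i. Suc (Suc i) < length p \<longrightarrow>
          lam {p ! i, p ! Suc i} \<le> lam {p ! Suc i, p ! Suc (Suc i)})"

definition temporal_dist :: "'a set \<Rightarrow> 'a set set \<Rightarrow> ('a set \<Rightarrow> nat) \<Rightarrow> 'a \<Rightarrow> 'a \<Rightarrow> enat" where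
  "temporal_dist V E lam u v =
     Inf {enat (length p - 1) | p. temporal_path V E lam p \<and> hd p = u \<and> last p = v}"

definition ss_temporal_preserver ::
  "'a set \<Rightarrow> 'a set set \<Rightarrow> ('a set \<Rightarrow> nat) \<Rightarrow> 'a \<Rightarrow> 'a set set \<Rightarrow> bool" where
  "ss_temporal_preserver V E lam s H \<longleftrightarrow> H \<subseteq> E \<and>
     (\<forall>v\<in>V. temporal_dist V H lam s v = temporal_dist V E lam s v)"

end

(* Take k paths P 1, ..., P k of length L from the source s that share vertices but have pairwise
   distinct edges, and label each edge by its (path index, position) in lexicographic order. A
   temporal path can then only switch to paths of larger index, and if the vertices are arranged so
   that a vertex lies at an earlier position on every later path through it, such a switch never
   gains progress. So the private endpoint of P m is at temporal distance L from s and P m is the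
   only temporal path of that length to it: every single-source preserver contains all k * L
   edges. The zigzag paths below realise this with k = n div 8 and L = 2k + 1 on 7k + 1 vertices,
   giving k (2k + 1) = Theta(n^2) edges. *)

theory Submission
  imports Defs
begin

lemma temporal_path_mono:
  "temporal_path V H lam p \<Longrightarrow> H \<subseteq> E \<Longrightarrow> temporal_path V E lam p"
  unfolding temporal_path_def by blast

lemma temporal_dist_le:
  "temporal_path V E lam p \<Longrightarrow> hd p = u \<Longrightarrow> last p = v \<Longrightarrow>
     temporal_dist V E lam u v \<le> enat (length p - 1)"
  unfolding temporal_dist_def by (rule Inf_lower) blast

lemma temporal_dist_enatE:
  assumes "temporal_dist V E lam u v = enat d"
  obtains p where "temporal_path V E lam p" "hd p = u" "last p = v" "length p - 1 = d"
proof -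
  let ?S = "{enat (length p - 1) | p. temporal_path V E lam p \<and> hd p = u \<and> last p = v}"
  have "?S \<noteq> {}"
    using assms unfolding temporal_dist_def by (metis Inf_empty infinity_ne_i0 top_enat_def enat.distinct(1))
  then have "Inf ?S \<in> ?S"
    unfolding Inf_enat_def by (auto intro: LeastI)
  with assms that show thesis
    unfolding temporal_dist_def by auto
qed

definition path_edge :: "(nat \<Rightarrow> 'a) \<Rightarrow> nat \<Rightarrow> 'a set" where
  "path_edge q h = {q (h - 1), q h}"

locale path_family =
  fixes V :: "'a set" and s :: 'a and k L :: nat and P :: "nat \<Rightarrow> nat \<Rightarrow> 'a"
  assumes finite_V: "finite V"
    and P_in_V: "\<lbrakk>m \<in> {1..k}; h \<le> L\<rbrakk> \<Longrightarrow> P m h \<in> V"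
    and P_start: "m \<in> {1..k} \<Longrightarrow> P m 0 = s"
    and inj_P: "m \<in> {1..k} \<Longrightarrow> inj_on (P m) {..L}"
    and P_shift: "\<lbrakk>m \<in> {1..k}; m' \<in> {1..k}; m < m'; g \<le> L; g' \<le> L; 0 < g; P m g = P m' g'\<rbrakk>
      \<Longrightarrow> g' < g"
    and P_end_private: "\<lbrakk>m \<in> {1..k}; m' \<in> {1..k}; g \<le> L; P m' g = P m L\<rbrakk> \<Longrightarrow> m' = m"
    and path_edge_inj: "\<lbrakk>m \<in> {1..k}; m' \<in> {1..k}; h \<in> {1..L}; h' \<in> {1..L};
      path_edge (P m) h = path_edge (P m') h'\<rbrakk> \<Longrightarrow> m = m' \<and> h = h'"
begin

lemma P_eq_iff: "\<lbrakk>m \<in> {1..k}; g \<le> L; g' \<le> L\<rbrakk> \<Longrightarrow> P m g = P m g' \<longleftrightarrow> g = g'"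
  using inj_P inj_on_eq_iff by fastforce

definition edges :: "'a set set" where
  "edges = (\<lambda>(m, h). path_edge (P m) h) ` ({1..k} \<times> {1..L})"

definition label :: "'a set \<Rightarrow> nat" where
  "label e = (THE l. \<exists>m\<in>{1..k}. \<exists>h\<in>{1..L}. e = path_edge (P m) h \<and> l = m * Suc L + h)"

lemma path_edge_in_edges: "\<lbrakk>m \<in> {1..k}; h \<in> {1..L}\<rbrakk> \<Longrightarrow> path_edge (P m) h \<in> edges"
  unfolding edges_def by blast

lemma edgesE:
  assumes "e \<in> edges"
  obtains m h where "m \<in> {1..k}" "h \<in> {1..L}" "e = path_edge (P m) h"
  using assms unfolding edges_def by auto

lemma label_path_edge:
  assumes "m \<in> {1..k}" "h \<in> {1..L}"
  shows "label (path_edge (P m) h) = m * Suc L + h"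
  unfolding label_def by (rule the_equality) (use assms path_edge_inj in blast)+

lemma label_le_imp_index_le:
  assumes "m \<in> {1..k}" "m' \<in> {1..k}" "h \<in> {1..L}" "h' \<in> {1..L}"
    and "label (path_edge (P m) h) \<le> label (path_edge (P m') h')"
  shows "m \<le> m'"
proof (rule ccontr)
  assume "\<not> m \<le> m'"
  then have "Suc m' * Suc L \<le> m * Suc L" by (intro mult_le_mono1) simp
  then show False
    using assms by (simp add: label_path_edge)
qed

lemma temporal_graph: "temporal_graph V edges label"
  unfolding temporal_graph_def
proof (intro conjI ballI)
  show "finite V" by (rule finite_V)
  show "edges \<subseteq> {{u, v} | u v. u \<in> V \<and> v \<in> V \<and> u \<noteq> v}"
  proof
    fix e assume "e \<in> edges"
    then obtain m h where mh: "m \<in> {1..k}" "h \<in> {1..L}" and e: "e = path_edge (P m) h"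
      by (rule edgesE)
    have h: "h - 1 \<le> L" "h \<le> L" "h - 1 \<noteq> h"
      using mh by auto
    then have "P m (h - 1) \<noteq> P m h"
      using mh(1) by (simp add: P_eq_iff)
    moreover have "P m (h - 1) \<in> V" "P m h \<in> V"
      using P_in_V[OF mh(1)] h by simp_all
    ultimately show "e \<in> {{u, v} | u v. u \<in> V \<and> v \<in> V \<and> u \<noteq> v}"
      unfolding e path_edge_def by blast
  qed
next
  fix e assume "e \<in> edges"
  then obtain m h where "m \<in> {1..k}" "h \<in> {1..L}" and "e = path_edge (P m) h"
    by (rule edgesE)
  then show "0 < label e"
    by (simp add: label_path_edge)
qed

lemma card_edges: "card edges = k * L"
proof -
  have "inj_on (\<lambda>(m, h). path_edge (P m) h) ({1..k} \<times> {1..L})"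
  proof (rule inj_onI)
    fix x y
    assume "x \<in> {1..k} \<times> {1..L}" "y \<in> {1..k} \<times> {1..L}"
      and "(\<lambda>(m, h). path_edge (P m) h) x = (\<lambda>(m, h). path_edge (P m) h) y"
    then show "x = y"
      using path_edge_inj[of "fst x" "fst y" "snd x" "snd y"] by (auto simp: case_prod_beta)
  qed
  then show ?thesis
    unfolding edges_def by (simp add: card_image card_cartesian_product)
qed

lemma temporal_path_P:
  assumes m: "m \<in> {1..k}"
  shows "temporal_path V edges label (map (P m) [0..<Suc L])"
    (is "temporal_path V edges label ?p")
proof -
  have edge: "{P m i, P m (Suc i)} = path_edge (P m) (Suc i)" for i
    by (simp add: path_edge_def)
  have "distinct ?p"
    using inj_P[OF m] by (simp add: distinct_map atLeast0LessThan lessThan_Suc_atMost del: upt_Suc)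
  moreover have "set ?p \<subseteq> V"
    using P_in_V[OF m] by (auto simp del: upt_Suc)
  ultimately show ?thesis
    unfolding temporal_path_def
    using m by (simp add: edge path_edge_in_edges label_path_edge del: upt_Suc)
qed

lemma position_shift:
  assumes m: "m \<in> {1..k}" "m' \<in> {1..k}" and g: "g \<le> L" "g' \<le> L"
    and eq: "P m g = P m' g'" and later: "g = 0 \<or> m \<le> m'"
  shows "g' < g \<or> g' = g \<and> (g = 0 \<or> m' = m)"
proof (cases "g = 0")
  case True
  then have "P m' g' = P m' 0"
    using eq m by (simp add: P_start)
  then show ?thesis
    using True m g by (simp add: P_eq_iff)
next
  case False
  then show ?thesis
    using later P_shift[OF m _ g _ eq] eq m(1) g by (cases "m = m'") (auto simp: P_eq_iff)
qed

text \<open>The invariant behind the lower bound: after \<open>j\<close> steps the walk is at position \<open>g \<le> j\<close> on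
  the path of its last edge, with equality only along an initial segment of that path.\<close>
lemma position_le_steps:
  assumes "0 < k" and p: "temporal_path V edges label p" "hd p = s"
  shows "j < length p \<Longrightarrow> \<exists>m\<in>{1..k}. \<exists>g\<le>L. g \<le> j \<and> p ! j = P m g \<and>
    (g = j \<longrightarrow> (\<forall>i\<le>j. p ! i = P m i)) \<and>
    (0 < j \<longrightarrow> (\<exists>h\<in>{1..L}. {p ! (j - 1), p ! j} = path_edge (P m) h))"
proof (induction j)
  case 0
  have "p ! 0 = P 1 0"
    using p \<open>0 < k\<close> unfolding temporal_path_def by (simp add: hd_conv_nth P_start)
  then show ?case
    using \<open>0 < k\<close> by force
next
  case (Suc j)
  then have "j < length p"
    by simp
  then obtain m g where m: "m \<in> {1..k}" "g \<le> L" "g \<le> j" and pj: "p ! j = P m g"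
    and prefix: "g = j \<longrightarrow> (\<forall>i\<le>j. p ! i = P m i)"
    and last_edge: "0 < j \<longrightarrow> (\<exists>h\<in>{1..L}. {p ! (j - 1), p ! j} = path_edge (P m) h)"
    using Suc.IH by blast
  have "{p ! j, p ! Suc j} \<in> edges"
    using p Suc.prems unfolding temporal_path_def by blast
  then obtain m' h' where m': "m' \<in> {1..k}" "h' \<in> {1..L}"
    and e: "{p ! j, p ! Suc j} = path_edge (P m') h'"
    by (rule edgesE)
  have labels: "label {p ! i, p ! Suc i} \<le> label {p ! Suc i, p ! Suc (Suc i)}"
    if "Suc (Suc i) < length p" for i
    using p(1) that unfolding temporal_path_def by blast
  have later: "g = 0 \<or> m \<le> m'"
  proof (cases "g = 0")
    case False
    then have "0 < j"
      using m(3) by simp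
    with last_edge obtain h where h: "h \<in> {1..L}" and e0: "{p ! (j - 1), p ! j} = path_edge (P m) h"
      by blast
    have "label {p ! (j - 1), p ! j} \<le> label {p ! j, p ! Suc j}"
      using labels[of "j - 1"] Suc.prems \<open>0 < j\<close> by simp
    then show ?thesis
      using label_le_imp_index_le[OF m(1) m'(1) h m'(2)] e0 e by simp
  qed simp
  have "p ! j = P m' (h' - 1) \<and> p ! Suc j = P m' h' \<or> p ! j = P m' h' \<and> p ! Suc j = P m' (h' - 1)"
    using e unfolding path_edge_def doubleton_eq_iff .
  then obtain g' g'' where g': "g' \<le> L" "g'' \<le> L" "g'' \<le> Suc g'"
    and pj': "p ! j = P m' g'" and pSj: "p ! Suc j = P m' g''"
  proof (elim disjE conjE)
    assume "p ! j = P m' (h' - 1)" "p ! Suc j = P m' h'"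
    with m'(2) show thesis
      by (intro that[of "h' - 1" h']) auto
  next
    assume "p ! j = P m' h'" "p ! Suc j = P m' (h' - 1)"
    with m'(2) show thesis
      by (intro that[of h' "h' - 1"]) auto
  qed
  have shift: "g' < g \<or> g' = g \<and> (g = 0 \<or> m' = m)"
    using position_shift[OF m(1) m'(1) m(2) g'(1) _ later] pj pj' by simp
  have "g'' \<le> Suc j"
    using g'(3) shift m(3) by linarith
  moreover have "\<forall>i\<le>Suc j. p ! i = P m' i" if "g'' = Suc j"
  proof -
    have "g = j" "g = 0 \<or> m' = m"
      using that g'(3) shift m(3) by auto
    then show ?thesis
      using prefix pSj that m m' P_start by (auto simp: le_Suc_eq)
  qed
  moreover have "{p ! (Suc j - 1), p ! Suc j} = path_edge (P m') h'"
    using e by simp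
  ultimately show ?case
    using m' g'(2) pSj by blast
qed

lemma shortest_path_to_end:
  assumes m: "m \<in> {1..k}"
    and p: "temporal_path V edges label p" "hd p = s" "last p = P m L"
  shows "L \<le> length p - 1" and "length p - 1 = L \<Longrightarrow> p = map (P m) [0..<Suc L]"
proof -
  have "p \<noteq> []"
    using p unfolding temporal_path_def by simp
  then have len: "length p - 1 < length p" and end_p: "p ! (length p - 1) = P m L"
    using p by (simp_all add: last_conv_nth)
  have "0 < k"
    using m by simp
  obtain m' g where m': "m' \<in> {1..k}" and g: "g \<le> L" "g \<le> length p - 1"
    and end_pos: "p ! (length p - 1) = P m' g"
    and prefix: "g = length p - 1 \<longrightarrow> (\<forall>i\<le>length p - 1. p ! i = P m' i)"
    using position_le_steps[OF \<open>0 < k\<close> p(1,2) len] by blast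
  have "P m' g = P m L"
    using end_p end_pos by simp
  moreover from this have "m' = m"
    using P_end_private[OF m m' g(1)] by simp
  ultimately have "g = L"
    using P_eq_iff[OF m g(1)] by simp
  then show "L \<le> length p - 1"
    using g(2) by simp
  show "p = map (P m) [0..<Suc L]" if "length p - 1 = L"
    using that prefix \<open>g = L\<close> \<open>m' = m\<close> \<open>p \<noteq> []\<close>
    by (intro nth_equalityI) (auto simp del: upt_Suc)
qed

lemma preserver_eq_edges:
  assumes H: "ss_temporal_preserver V edges label s H"
  shows "H = edges"
proof
  show H_sub: "H \<subseteq> edges"
    using H unfolding ss_temporal_preserver_def by blast
  show "edges \<subseteq> H"
  proof
    fix e assume "e \<in> edges"
    then obtain m h where m: "m \<in> {1..k}" "h \<in> {1..L}" and e: "e = path_edge (P m) h"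
      by (rule edgesE)
    have "P m L \<in> V"
      using P_in_V[OF m(1)] by simp
    then have "temporal_dist V H label s (P m L) = temporal_dist V edges label s (P m L)"
      using H unfolding ss_temporal_preserver_def by blast
    also have "\<dots> \<le> enat L"
    proof -
      have "hd (map (P m) [0..<Suc L]) = s" "last (map (P m) [0..<Suc L]) = P m L"
        using P_start[OF m(1)] by (simp_all add: hd_map last_map del: upt_Suc)
      from temporal_dist_le[OF temporal_path_P[OF m(1)] this] show ?thesis
        by (simp del: upt_Suc)
    qed
    finally obtain d where d: "temporal_dist V H label s (P m L) = enat d" and "d \<le> L"
      by (metis enat_ile enat_ord_simps(1))
    obtain p where p: "temporal_path V H label p" "hd p = s" "last p = P m L"
      and "length p - 1 = d"
      using d by (rule temporal_dist_enatE)
    with \<open>d \<le> L\<close> have "p = map (P m) [0..<Suc L]"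
      using shortest_path_to_end[OF m(1) temporal_path_mono[OF p(1) H_sub] p(2,3)] by simp
    moreover have "h - 1 < Suc L" "Suc (h - 1) = h" "h < Suc L"
      using m(2) by auto
    ultimately have "Suc (h - 1) < length p" and "p ! (h - 1) = P m (h - 1)" "p ! Suc (h - 1) = P m h"
      by (simp_all del: upt_Suc)
    moreover have "{p ! i, p ! Suc i} \<in> H" if "Suc i < length p" for i
      using p(1) that unfolding temporal_path_def by blast
    ultimately show "e \<in> H"
      unfolding e path_edge_def by metis
  qed
qed

end

text \<open>Path \<open>m\<close> alternates between the vertices \<open>m + t\<close> (position \<open>2t + 1\<close>) and
  \<open>2k + 3m + t\<close> (position \<open>2t + 2\<close>) and ends at \<open>6k + m\<close>. Its forward and backward edges between
  the two ranges have gaps \<open>2k + 2m\<close> and \<open>2k + 2m - 1\<close>, which keeps the edges of different paths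
  apart, and a shared vertex sits at an earlier position on the later path.\<close>
definition zigzag :: "nat \<Rightarrow> nat \<Rightarrow> nat \<Rightarrow> nat" where
  "zigzag k m h =
     (if h = 0 then 0
      else if h = 2 * k + 1 then 6 * k + m
      else if odd h then m + h div 2
      else 2 * k + 3 * m + h div 2 - 1)"

lemma zigzag_cases:
  fixes h :: nat
  assumes "h \<le> 2 * k + 1"
  obtains (source) "h = 0" "zigzag k m h = 0"
    | (target) "h = 2 * k + 1" "zigzag k m h = 6 * k + m"
    | (odd) t where "t < k" "h = 2 * t + 1" "zigzag k m h = m + t"
    | (even) t where "t < k" "h = 2 * t + 2" "zigzag k m h = 2 * k + 3 * m + t"
proof -
  have "h = 0 \<or> h = 2 * k + 1 \<or> (\<exists>t<k. h = 2 * t + 1) \<or> (\<exists>t<k. h = 2 * t + 2)"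
    using assms by presburger
  then show thesis
    using that unfolding zigzag_def by auto
qed

lemma zigzag_end: "zigzag k m (2 * k + 1) = 6 * k + m"
  by (simp add: zigzag_def)

lemma zigzag_le: "m \<le> k \<Longrightarrow> h \<le> 2 * k + 1 \<Longrightarrow> zigzag k m h \<le> 7 * k"
  by (erule zigzag_cases[of h k m]) linarith+

lemma zigzag_inj: "m \<in> {1..k} \<Longrightarrow> inj_on (zigzag k m) {..2 * k + 1}"
proof (rule inj_onI)
  fix g g' assume "m \<in> {1..k}" "g \<in> {..2 * k + 1}" "g' \<in> {..2 * k + 1}"
    and "zigzag k m g = zigzag k m g'"
  then show "g = g'"
    by (simp only: atMost_iff atLeastAtMost_iff)
      (erule zigzag_cases[of g k m]; erule zigzag_cases[of g' k m]; linarith)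
qed

lemma zigzag_shift:
  assumes "m \<in> {1..k}" "m' \<in> {1..k}" "m < m'" "g \<le> 2 * k + 1" "g' \<le> 2 * k + 1" "0 < g"
    and "zigzag k m g = zigzag k m' g'"
  shows "g' < g"
  using assms(4-) assms(1-3)[simplified]
  by (elim zigzag_cases[of g k m] zigzag_cases[of g' k m']; linarith)

lemma zigzag_end_private:
  assumes "m \<in> {1..k}" "m' \<in> {1..k}" "g \<le> 2 * k + 1" "zigzag k m' g = zigzag k m (2 * k + 1)"
  shows "m' = m"
  using assms(3,4) assms(1,2)[simplified] unfolding zigzag_end
  by (elim zigzag_cases[of g k m']; linarith)

lemma path_edge_zigzag_cases:
  assumes "h \<in> {1..2 * k + 1}"
  obtains (first) "h = 1" "path_edge (zigzag k m) h = {0, m}"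
    | (forward) t where "t < k" "h = 2 * t + 2" "path_edge (zigzag k m) h = {m + t, 2 * k + 3 * m + t}"
    | (backward) t where "t + 1 < k" "h = 2 * t + 3"
        "path_edge (zigzag k m) h = {2 * k + 3 * m + t, m + t + 1}"
    | (last) "0 < k" "h = 2 * k + 1" "path_edge (zigzag k m) h = {3 * k + 3 * m - 1, 6 * k + m}"
proof -
  have "1 \<le> h" "h \<le> 2 * k + 1"
    using assms by simp_all
  then have "h = 1 \<or> 0 < k \<and> h = 2 * k + 1 \<or> (\<exists>t<k. h = 2 * t + 2) \<or> (\<exists>t. t + 1 < k \<and> h = 2 * t + 3)"
    by presburger
  then show thesis
  proof (elim disjE exE conjE)
    assume "h = 1"
    then show thesis
      using first by (simp add: path_edge_def zigzag_def)
  next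
    assume "0 < k" "h = 2 * k + 1"
    then show thesis
      using last by (simp add: path_edge_def zigzag_def)
  next
    fix t assume "t < k" "h = 2 * t + 2"
    then show thesis
      using forward by (simp add: path_edge_def zigzag_def)
  next
    fix t assume "t + 1 < k" "h = 2 * t + 3"
    then show thesis
      using backward by (simp add: path_edge_def zigzag_def)
  qed
qed

lemma path_edge_zigzag_inj:
  assumes "m \<in> {1..k}" "m' \<in> {1..k}" "h \<in> {1..2 * k + 1}" "h' \<in> {1..2 * k + 1}"
    and "path_edge (zigzag k m) h = path_edge (zigzag k m') h'"
  shows "m = m' \<and> h = h'"
proof -
  \<comment> \<open>a forward edge of one path equal to a backward edge of another would force \<open>2m = 2m' + 1\<close>\<close>
  have parity: "3 * a + b \<noteq> 3 * c + d" if "a + b = Suc (c + d)" for a b c d :: nat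
    using that by presburger
  show ?thesis
    using assms(3-) assms(1,2)[simplified]
    by (elim path_edge_zigzag_cases[of h k m] path_edge_zigzag_cases[of h' k m'])
      (simp_all add: doubleton_eq_iff, (metis parity | linarith)+)
qed

lemma zigzag_path_family:
  assumes "7 * k < n"
  shows "path_family {0..<n} 0 k (2 * k + 1) (zigzag k)"
proof
  fix m h assume "m \<in> {1..k}" "h \<le> 2 * k + 1"
  then show "zigzag k m h \<in> {0..<n}"
    using zigzag_le[of m k h] assms by simp
qed (simp, simp add: zigzag_def, fact zigzag_inj, fact zigzag_shift, fact zigzag_end_private,
    fact path_edge_zigzag_inj)

lemma div_8_square_bounds:
  fixes n :: nat
  assumes "8 \<le> n"
  shows "n\<^sup>2 \<le> 128 * (n div 8 * (2 * (n div 8) + 1))" and "n div 8 * (2 * (n div 8) + 1) \<le> n\<^sup>2"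
proof -
  define k where "k = n div 8"
  have k: "1 \<le> k" "8 * k \<le> n" "n \<le> 16 * k"
    using assms unfolding k_def by presburger+
  have "n\<^sup>2 \<le> (16 * k)\<^sup>2"
    using k(3) by (rule power_mono) simp
  also have "\<dots> \<le> 128 * (k * (2 * k + 1))"
    by (simp add: power2_eq_square)
  finally show "n\<^sup>2 \<le> 128 * (k * (2 * k + 1))" .
  have "k * (2 * k + 1) \<le> k * (64 * k)"
    using k(1) by (intro mult_le_mono2) linarith
  also have "\<dots> = (8 * k)\<^sup>2"
    by (simp add: power2_eq_square)
  also have "\<dots> \<le> n\<^sup>2"
    using k(2) by (rule power_mono) simp
  finally show "k * (2 * k + 1) \<le> n\<^sup>2" .
qed

theorem corollary14:
  shows "\<exists>(c::real) (C::real) (N::nat). c > 0 \<and> C > 0 \<and>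
    (\<forall>n::nat. n \<ge> 1 \<longrightarrow>
      (\<exists>(V::nat set) E lam s. temporal_graph V E lam \<and> card V = n \<and> s \<in> V \<and>
         (\<forall>H. ss_temporal_preserver V E lam s H \<longrightarrow>
            (n \<ge> N \<longrightarrow> c * real n ^ 2 \<le> real (card H) \<and> real (card H) \<le> C * real n ^ 2))))"
proof -
  have "\<exists>(V::nat set) E lam s. temporal_graph V E lam \<and> card V = n \<and> s \<in> V \<and>
    (\<forall>H. ss_temporal_preserver V E lam s H \<longrightarrow>
      (8 \<le> n \<longrightarrow> 1 / 128 * real n ^ 2 \<le> real (card H) \<and> real (card H) \<le> 1 * real n ^ 2))"
    if "1 \<le> n" for n
  proof -
    define k where "k = n div 8"
    have "7 * k < n"
      using \<open>1 \<le> n\<close> unfolding k_def by linarith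
    then interpret G: path_family "{0..<n}" 0 k "2 * k + 1" "zigzag k"
      by (rule zigzag_path_family)
    show ?thesis
    proof (intro exI[of _ "{0..<n}"] exI[of _ G.edges] exI[of _ G.label] exI[of _ 0] conjI allI impI)
      show "temporal_graph {0..<n} G.edges G.label"
        by (rule G.temporal_graph)
      show "card {0..<n} = n" "0 \<in> {0..<n}"
        using \<open>1 \<le> n\<close> by simp_all
    next
      fix H assume "ss_temporal_preserver {0..<n} G.edges G.label 0 H" "8 \<le> n"
      then have "card H = k * (2 * k + 1)"
        using G.preserver_eq_edges G.card_edges by metis
      then have "n\<^sup>2 \<le> 128 * card H" "card H \<le> n\<^sup>2"
        using div_8_square_bounds[OF \<open>8 \<le> n\<close>] unfolding k_def by simp_all
      then have "real (n\<^sup>2) \<le> real (128 * card H)" "real (card H) \<le> real (n\<^sup>2)"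
        by (simp_all only: of_nat_le_iff)
      then show "1 / 128 * real n ^ 2 \<le> real (card H)" "real (card H) \<le> 1 * real n ^ 2"
        by simp_all
    qed
  qed
  then show ?thesis
    by (intro exI[of _ "1 / 128 :: real"] exI[of _ "1 :: real"] exI[of _ "8 :: nat"]) simp
qed

end
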